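(* Let $T$ be a Cartesian tree with $n$ nodes whose left subtree $A$ has $k-1$ nodes and whose right subtree $B$ has $n-k$ nodes. Then $|ng(T)|=|ng(A)|+|ng(B)|+|ng(T,k-1)|+|ng(T,k)|$.
   Context: Sequences are finite sequences of pairwise distinct integers indexed from $1$. The Cartesian tree $C(x)$ of a sequence $x$ of length $n$ is empty if $n=0$; otherwise, if $x[i]$ is the minimum of $x$, it is the binary tree with root $i$ (nodes labelled by positions), left subtree $C(x[1\ldots i-1])$ and right subtree $C(x[i+1\ldots n])$; Cartesian trees with $n$ nodes are exactly the binary trees with $n$ nodes. For $1\le i\le n-1$, $\tau(x,i)$ is obtained from $x$ by exchanging $x[i]$ and $x[i+1]$. For a Cartesian tree $T$ with $n$ nodes and $1\le i\le n-1$, $ng(T,i)=\{C(\tau(x,i)) : x \text{ a sequence with } C(x)=T\}$, with $ng(T,i)=\emptyset$ for $i\notin\{1,\ldots,n-1\}$, and $ng(T)=\bigcup_{i=1}^{n-1}ng(T,i)$ (so $ng$ of the empty tree or of a single node is empty). *)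

theory Defs
  imports "HOL-Library.Tree"
begin

text \<open>Sequences are lists of pairwise distinct integers (positions 1-indexed in the paper,
  0-indexed in lists). Cartesian trees are unlabelled binary trees (unit tree); node labels
  (positions) are determined by in-order traversal.\<close>

definition min_pos :: "int list \<Rightarrow> nat" where
  "min_pos xs = length (takeWhile (\<lambda>y. y \<noteq> Min (set xs)) xs)"

lemma min_pos_less: "xs \<noteq> [] \<Longrightarrow> min_pos xs < length xs"
proof -
  have "\<And>m. m \<in> set xs \<Longrightarrow> length (takeWhile (\<lambda>y. y \<noteq> m) xs) < length xs"
    by (induction xs) auto
  moreover assume "xs \<noteq> []"
  ultimately show ?thesis unfolding min_pos_def by simp
qed

function cart :: "int list \<Rightarrow> unit tree" where
  "cart xs = (if xs = [] then Leaf
     else Node (cart (take (min_pos xs) xs)) () (cart (drop (Suc (min_pos xs)) xs)))"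
  by auto
termination
  by (relation "measure length") (auto dest: min_pos_less)

declare cart.simps[simp del]

definition tau :: "int list \<Rightarrow> nat \<Rightarrow> int list" where
  "tau xs i = xs[i - 1 := xs ! i, i := xs ! (i - 1)]"

definition ng_at :: "unit tree \<Rightarrow> nat \<Rightarrow> unit tree set" where
  "ng_at T i = (if 1 \<le> i \<and> i \<le> size T - 1
     then {cart (tau xs i) | xs. distinct xs \<and> cart xs = T} else {})"

definition ng :: "unit tree \<Rightarrow> unit tree set" where
  "ng T = (\<Union>i\<in>{1..size T - 1}. ng_at T i)"

end

theory Submission
  imports Defs
begin

text \<open>A sequence with Cartesian tree \<open>Node A () B\<close> splits as \<open>ys @ m # zs\<close> around its minimum \<open>m\<close>,
  with \<open>C(ys) = A\<close> and \<open>C(zs) = B\<close>. A swap inside \<open>ys\<close> (resp. \<open>zs\<close>) only acts on that part, so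
  these neighbours are the trees \<open>Node A' () B\<close> with \<open>A' \<in> ng A\<close> and \<open>Node A () B'\<close> with
  \<open>B' \<in> ng B\<close>; all of them occur because any two sequences can be shifted monotonically to lie
  above a common minimum. The two swaps next to the minimum move it, giving left subtrees of size
  \<open>k - 2\<close> and \<open>k\<close> instead of \<open>k - 1\<close>. Finally no swap preserves the Cartesian tree, so the
  first two families are disjoint as well.\<close>

lemma cart_Nil [simp]: "cart [] = Leaf"
  by (subst cart.simps) simp

lemma size_cart [simp]: "size (cart xs) = length xs"
proof (induction xs rule: cart.induct)
  case (1 xs)
  show ?case
  proof (cases "xs = []")
    case False
    then have "min_pos xs < length xs" by (rule min_pos_less)
    with 1 False show ?thesis by (subst cart.simps) simp
  qed simp
qed

lemma cart_min_split:
  assumes "distinct (ys @ m # zs)" and "\<forall>x\<in>set ys \<union> set zs. m < x"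
  shows "cart (ys @ m # zs) = Node (cart ys) () (cart zs)"
proof -
  have "Min (set (ys @ m # zs)) = m"
    using assms(2) by (intro Min_eqI) (auto simp: less_imp_le)
  moreover have "takeWhile (\<lambda>y. y \<noteq> m) (ys @ m # zs) = ys"
    using assms(1) by (subst takeWhile_append2) auto
  ultimately have "min_pos (ys @ m # zs) = length ys"
    unfolding min_pos_def by simp
  then show ?thesis by (subst cart.simps) simp
qed

lemma obtain_min_split:
  fixes xs :: "int list"
  assumes "distinct xs" and "xs \<noteq> []"
  obtains ys m zs where "xs = ys @ m # zs" and "\<forall>x\<in>set ys \<union> set zs. m < x"
proof -
  define m where "m = Min (set xs)"
  have "m \<in> set xs" using assms(2) by (simp add: m_def)
  then obtain ys zs where xs: "xs = ys @ m # zs"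
    by (meson split_list)
  have "m < x" if "x \<in> set ys \<union> set zs" for x
  proof -
    have "x \<in> set xs" using that xs by auto
    then have "m \<le> x" by (simp add: m_def)
    moreover have "x \<noteq> m" using assms(1) that xs by auto
    ultimately show ?thesis by simp
  qed
  with xs that show ?thesis by blast
qed

lemma cart_eq_NodeE:
  assumes "distinct xs" and "cart xs = Node A () B"
  obtains ys m zs where "xs = ys @ m # zs" and "\<forall>x\<in>set ys \<union> set zs. m < x"
    and "cart ys = A" and "cart zs = B" and "length ys = size A" and "length zs = size B"
proof -
  have "xs \<noteq> []" using assms(2) by auto
  then obtain ys m zs where xs: "xs = ys @ m # zs" and min: "\<forall>x\<in>set ys \<union> set zs. m < x"
    using obtain_min_split assms(1) by blast
  then have "Node (cart ys) () (cart zs) = Node A () B"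
    using cart_min_split assms by metis
  then have "cart ys = A" "cart zs = B" by simp_all
  moreover from this have "length ys = size A" "length zs = size B" by auto
  ultimately show ?thesis using xs min that by blast
qed

lemma cart_map_strict_mono:
  fixes f :: "int \<Rightarrow> int"
  assumes f: "strict_mono f" and "distinct xs"
  shows "cart (map f xs) = cart xs"
  using assms(2)
proof (induction xs rule: length_induct)
  case (1 xs)
  show ?case
  proof (cases "xs = []")
    case False
    then obtain ys m zs where xs: "xs = ys @ m # zs" and min: "\<forall>x\<in>set ys \<union> set zs. m < x"
      using obtain_min_split "1.prems" by blast
    have "distinct (map f xs)"
      using "1.prems" f by (simp add: distinct_map strict_mono_imp_inj_on)
    moreover have "\<forall>x\<in>set (map f ys) \<union> set (map f zs). f m < x"
      using min f by (auto simp: strict_mono_less)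
    ultimately have "cart (map f xs) = Node (cart (map f ys)) () (cart (map f zs))"
      using cart_min_split xs by simp
    also have "\<dots> = Node (cart ys) () (cart zs)"
      using "1.IH" "1.prems" xs by auto
    also have "\<dots> = cart xs"
      using cart_min_split "1.prems" min xs by simp
    finally show ?thesis .
  qed simp
qed

lemma obtain_shifted_min_split:
  fixes ys zs :: "int list"
  assumes "distinct ys" and "distinct zs"
  obtains f g :: "int \<Rightarrow> int" where "strict_mono f" and "strict_mono g"
    and "distinct (map f ys @ 0 # map g zs)"
    and "\<forall>x\<in>set (map f ys) \<union> set (map g zs). 0 < x"
    and "cart (map f ys @ 0 # map g zs) = Node (cart ys) () (cart zs)"
proof -
  define b where "b = sum_list (map abs (ys @ zs)) + 1"
  have bound: "\<bar>x\<bar> < b" if "x \<in> set ys \<union> set zs" for x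
  proof -
    have "\<bar>x\<bar> \<le> sum_list (map abs (ys @ zs))"
      using that by (intro member_le_sum_list) auto
    then show ?thesis by (simp add: b_def)
  qed
  let ?f = "\<lambda>y. y + b" and ?g = "\<lambda>z. z + 3 * b"
  have mono: "strict_mono ?f" "strict_mono ?g"
    by (auto intro: strict_monoI)
  have pos: "\<forall>x\<in>set (map ?f ys) \<union> set (map ?g zs). 0 < x"
    using bound by fastforce
  have "y + b < z + 3 * b" if "y \<in> set ys" "z \<in> set zs" for y z
  proof -
    have "\<bar>y\<bar> < b" "\<bar>z\<bar> < b" using bound that by auto
    then show ?thesis by linarith
  qed
  then have "set (map ?f ys) \<inter> set (map ?g zs) = {}"
    by fastforce
  then have dist: "distinct (map ?f ys @ 0 # map ?g zs)"
    using assms pos by (auto simp: distinct_map)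
  moreover have "cart (map ?f ys @ 0 # map ?g zs) = Node (cart ys) () (cart zs)"
    using cart_min_split[OF dist pos] cart_map_strict_mono mono assms by simp
  ultimately show ?thesis using mono pos that by blast
qed

lemma ex_distinct_cart_eq: "\<exists>xs. distinct xs \<and> cart xs = t"
proof (induction t)
  case Leaf
  show ?case by (intro exI[of _ "[]"]) simp
next
  case (Node l u r)
  then obtain ys zs where ys: "distinct ys" "cart ys = l" and zs: "distinct zs" "cart zs = r"
    by blast
  obtain f g :: "int \<Rightarrow> int" where "distinct (map f ys @ 0 # map g zs)"
    and "cart (map f ys @ 0 # map g zs) = Node (cart ys) () (cart zs)"
    using obtain_shifted_min_split[OF ys(1) zs(1)] by blast
  with ys zs have "distinct (map f ys @ 0 # map g zs) \<and> cart (map f ys @ 0 # map g zs) = Node l u r"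
    by simp
  then show ?case by blast
qed

lemma length_tau [simp]: "length (tau xs i) = length xs"
  unfolding tau_def by simp

lemma set_tau: "1 \<le> i \<Longrightarrow> i < length xs \<Longrightarrow> set (tau xs i) = set xs"
  unfolding tau_def by (rule set_swap) auto

lemma distinct_tau: "1 \<le> i \<Longrightarrow> i < length xs \<Longrightarrow> distinct (tau xs i) = distinct xs"
  unfolding tau_def by (rule distinct_swap) auto

lemma tau_map: "1 \<le> i \<Longrightarrow> i < length xs \<Longrightarrow> tau (map f xs) i = map f (tau xs i)"
  unfolding tau_def by (simp add: map_update)

lemma tau_append_left:
  "1 \<le> i \<Longrightarrow> i < length ys \<Longrightarrow> tau (ys @ zs) i = tau ys i @ zs"
  unfolding tau_def by (intro nth_equalityI) (auto simp: nth_append nth_list_update)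

lemma tau_append_Cons_right:
  "1 \<le> j \<Longrightarrow> j < length zs \<Longrightarrow> tau (ys @ m # zs) (Suc (length ys + j)) = ys @ m # tau zs j"
  unfolding tau_def by (intro nth_equalityI) (auto simp: nth_append nth_list_update nth_Cons')

lemma tau_adjacent: "tau (ys @ a # b # zs) (Suc (length ys)) = ys @ b # a # zs"
  unfolding tau_def by (simp add: nth_append list_update_append)

lemma cart_tau_left:
  assumes "distinct (ys @ m # zs)" and "\<forall>x\<in>set ys \<union> set zs. m < x"
    and "1 \<le> i" and "i < length ys"
  shows "cart (tau (ys @ m # zs) i) = Node (cart (tau ys i)) () (cart zs)"
proof -
  have "set (tau ys i) = set ys" and "distinct (tau ys i)"
    using assms set_tau distinct_tau by auto
  with assms have "cart (tau ys i @ m # zs) = Node (cart (tau ys i)) () (cart zs)"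
    by (intro cart_min_split) auto
  with assms(3,4) show ?thesis by (simp add: tau_append_left)
qed

lemma cart_tau_right:
  assumes "distinct (ys @ m # zs)" and "\<forall>x\<in>set ys \<union> set zs. m < x"
    and "1 \<le> j" and "j < length zs"
  shows "cart (tau (ys @ m # zs) (Suc (length ys + j))) = Node (cart ys) () (cart (tau zs j))"
proof -
  have "set (tau zs j) = set zs" and "distinct (tau zs j)"
    using assms set_tau distinct_tau by auto
  with assms have "cart (ys @ m # tau zs j) = Node (cart ys) () (cart (tau zs j))"
    by (intro cart_min_split) auto
  with assms(3,4) show ?thesis by (simp add: tau_append_Cons_right)
qed

lemma size_left_cart_tau_before_min:
  assumes "distinct (ys @ m # zs)" and "\<forall>x\<in>set ys \<union> set zs. m < x" and "ys \<noteq> []"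
  shows "Suc (size (left (cart (tau (ys @ m # zs) (length ys))))) = length ys"
proof -
  obtain ys' y where ys: "ys = ys' @ [y]"
    using assms(3) by (metis rev_exhaust)
  have "tau (ys @ m # zs) (length ys) = ys' @ m # y # zs"
    using tau_adjacent[of ys' y m zs] ys by simp
  then show ?thesis
    using assms(1,2) ys cart_min_split[of ys' m "y # zs"] by simp
qed

lemma size_left_cart_tau_after_min:
  assumes "distinct (ys @ m # zs)" and "\<forall>x\<in>set ys \<union> set zs. m < x" and "zs \<noteq> []"
  shows "size (left (cart (tau (ys @ m # zs) (Suc (length ys))))) = Suc (length ys)"
proof -
  obtain z zs' where zs: "zs = z # zs'"
    using assms(3) by (metis list.exhaust)
  have "tau (ys @ m # zs) (Suc (length ys)) = (ys @ [z]) @ m # zs'"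
    using tau_adjacent[of ys m z zs'] zs by simp
  then show ?thesis
    using assms(1,2) zs cart_min_split[of "ys @ [z]" m zs'] by simp
qed

lemma cart_tau_neq:
  fixes xs :: "int list"
  assumes "distinct xs" and "1 \<le> i" and "i < length xs"
  shows "cart (tau xs i) \<noteq> cart xs"
  using assms
proof (induction xs arbitrary: i rule: length_induct)
  case (1 xs)
  have "xs \<noteq> []" using "1.prems"(3) by auto
  then obtain ys m zs where xs: "xs = ys @ m # zs" and min: "\<forall>x\<in>set ys \<union> set zs. m < x"
    using obtain_min_split "1.prems"(1) by blast
  have dist: "distinct (ys @ m # zs)" using "1.prems"(1) xs by simp
  have cart_xs: "cart xs = Node (cart ys) () (cart zs)"
    using cart_min_split[OF dist min] xs by simp
  consider "i < length ys" | "i = length ys" | "i = Suc (length ys)" | "Suc (length ys) < i"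
    by linarith
  then show ?case
  proof cases
    case 1
    have "cart (tau ys i) \<noteq> cart ys"
      using "1.IH" xs dist "1.prems"(2) 1 by simp
    then show ?thesis
      using cart_tau_left[OF dist min "1.prems"(2) 1] xs cart_xs by simp
  next
    case 2
    then have "ys \<noteq> []" using "1.prems"(2) by auto
    then show ?thesis
      using size_left_cart_tau_before_min[OF dist min] xs cart_xs 2 by auto
  next
    case 3
    then have "zs \<noteq> []" using "1.prems"(3) xs by auto
    then show ?thesis
      using size_left_cart_tau_after_min[OF dist min] xs cart_xs 3 by auto
  next
    case 4
    define j where "j = i - Suc (length ys)"
    have i: "i = Suc (length ys + j)" and j: "1 \<le> j" "j < length zs"
      using 4 "1.prems"(3) xs by (auto simp: j_def)
    then have "cart (tau zs j) \<noteq> cart zs"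
      using "1.IH" xs dist by simp
    then show ?thesis
      using cart_tau_right[OF dist min j] xs i cart_xs by simp
  qed
qed

lemma finite_trees_of_size_le: "finite {t :: unit tree. size t \<le> n}"
proof (induction n)
  case 0
  have "{t :: unit tree. size t \<le> 0} = {Leaf}" by auto
  then show ?case by simp
next
  case (Suc n)
  let ?S = "{t :: unit tree. size t \<le> n}"
  have "{t :: unit tree. size t \<le> Suc n} \<subseteq> insert Leaf ((\<lambda>(l, r). Node l () r) ` (?S \<times> ?S))"
  proof
    fix t :: "unit tree"
    assume "t \<in> {t. size t \<le> Suc n}"
    then show "t \<in> insert Leaf ((\<lambda>(l, r). Node l () r) ` (?S \<times> ?S))"
      by (cases t) force+
  qed
  then show ?case using Suc by (meson finite_SigmaI finite_imageI finite_insert finite_subset)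
qed

lemma ng_at_eq:
  assumes "1 \<le> i" and "i < size T"
  shows "ng_at T i = {cart (tau xs i) | xs. distinct xs \<and> cart xs = T}"
  using assms unfolding ng_at_def by auto

lemma ng_at_index_range: "t \<in> ng_at T i \<Longrightarrow> 1 \<le> i \<and> i < size T"
  unfolding ng_at_def by (auto split: if_splits)

lemma ng_eq_UN: "ng T = (\<Union>i. ng_at T i)"
  unfolding ng_def by (auto simp: ng_at_def split: if_splits)

lemma size_ng_at: "t \<in> ng_at T i \<Longrightarrow> size t = size T"
  unfolding ng_at_def by (auto split: if_splits)

lemma size_ng: "t \<in> ng T \<Longrightarrow> size t = size T"
  unfolding ng_def by (auto dest: size_ng_at)

lemma finite_ng_at: "finite (ng_at T i)"
  by (rule finite_subset[OF _ finite_trees_of_size_le[of "size T"]]) (auto dest: size_ng_at)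

lemma finite_ng: "finite (ng T)"
  unfolding ng_def by (auto intro: finite_ng_at)

lemma not_in_ng: "T \<notin> ng T"
proof
  assume "T \<in> ng T"
  then obtain i xs where "1 \<le> i" "i < size T" "distinct xs" "cart xs = T" "cart (tau xs i) = T"
    unfolding ng_def ng_at_def by (auto split: if_splits)
  then show False using cart_tau_neq[of xs i] by auto
qed

lemma ng_at_Node_left:
  assumes "i < size A"
  shows "ng_at (Node A () B) i = (\<lambda>A'. Node A' () B) ` ng_at A i"
proof (cases "i = 0")
  case True
  then show ?thesis by (auto dest: ng_at_index_range)
next
  case False
  with assms have i: "1 \<le> i" "i < size A" by auto
  show ?thesis
  proof (intro equalityI subsetI)
    fix t
    assume "t \<in> ng_at (Node A () B) i"
    then obtain xs where xs: "distinct xs" "cart xs = Node A () B" and t: "t = cart (tau xs i)"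
      using i by (auto simp: ng_at_eq)
    obtain ys m zs where split: "xs = ys @ m # zs" "\<forall>x\<in>set ys \<union> set zs. m < x"
      and parts: "cart ys = A" "cart zs = B" "length ys = size A" "length zs = size B"
      by (rule cart_eq_NodeE[OF xs])
    have "t = Node (cart (tau ys i)) () B"
      using cart_tau_left[of ys m zs i] xs split parts i t by simp
    moreover have "cart (tau ys i) \<in> ng_at A i"
      using i xs split parts by (auto simp: ng_at_eq)
    ultimately show "t \<in> (\<lambda>A'. Node A' () B) ` ng_at A i" by blast
  next
    fix t
    assume "t \<in> (\<lambda>A'. Node A' () B) ` ng_at A i"
    then obtain ys where ys: "distinct ys" "cart ys = A" and t: "t = Node (cart (tau ys i)) () B"
      using i by (auto simp: ng_at_eq)
    obtain zs where zs: "distinct zs" "cart zs = B"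
      using ex_distinct_cart_eq by blast
    obtain f g :: "int \<Rightarrow> int" where mono: "strict_mono f" "strict_mono g"
      and dist: "distinct (map f ys @ 0 # map g zs)"
      and min: "\<forall>x\<in>set (map f ys) \<union> set (map g zs). 0 < x"
      and "cart (map f ys @ 0 # map g zs) = Node (cart ys) () (cart zs)"
      by (rule obtain_shifted_min_split[OF ys(1) zs(1)])
    let ?xs = "map f ys @ 0 # map g zs"
    have "cart ?xs = Node A () B"
      using \<open>cart ?xs = Node (cart ys) () (cart zs)\<close> ys zs by simp
    moreover have "cart (tau ?xs i) = t"
    proof -
      have "i < length ys" using i size_cart[of ys] ys(2) by simp
      then have "cart (tau ?xs i) = Node (cart (map f (tau ys i))) () (cart (map g zs))"
        using cart_tau_left[OF dist min] i by (simp add: tau_map)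
      also have "\<dots> = t"
        using cart_map_strict_mono mono distinct_tau \<open>i < length ys\<close> i ys zs t by simp
      finally show ?thesis .
    qed
    ultimately show "t \<in> ng_at (Node A () B) i"
      using i dist by (auto simp: ng_at_eq)
  qed
qed

lemma ng_at_Node_right:
  assumes "1 \<le> j"
  shows "ng_at (Node A () B) (Suc (size A + j)) = (\<lambda>B'. Node A () B') ` ng_at B j"
proof (cases "j < size B")
  case False
  then show ?thesis by (auto dest: ng_at_index_range)
next
  case True
  with assms have j: "1 \<le> j" "j < size B" by auto
  show ?thesis
  proof (intro equalityI subsetI)
    fix t
    assume "t \<in> ng_at (Node A () B) (Suc (size A + j))"
    then obtain xs where xs: "distinct xs" "cart xs = Node A () B"
      and t: "t = cart (tau xs (Suc (size A + j)))"
      using j by (auto simp: ng_at_eq)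
    obtain ys m zs where split: "xs = ys @ m # zs" "\<forall>x\<in>set ys \<union> set zs. m < x"
      and parts: "cart ys = A" "cart zs = B" "length ys = size A" "length zs = size B"
      by (rule cart_eq_NodeE[OF xs])
    have "t = Node A () (cart (tau zs j))"
      using cart_tau_right[of ys m zs j] xs split parts j t by simp
    moreover have "cart (tau zs j) \<in> ng_at B j"
      using j xs split parts by (auto simp: ng_at_eq)
    ultimately show "t \<in> (\<lambda>B'. Node A () B') ` ng_at B j" by blast
  next
    fix t
    assume "t \<in> (\<lambda>B'. Node A () B') ` ng_at B j"
    then obtain zs where zs: "distinct zs" "cart zs = B" and t: "t = Node A () (cart (tau zs j))"
      using j by (auto simp: ng_at_eq)
    obtain ys where ys: "distinct ys" "cart ys = A"
      using ex_distinct_cart_eq by blast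
    obtain f g :: "int \<Rightarrow> int" where mono: "strict_mono f" "strict_mono g"
      and dist: "distinct (map f ys @ 0 # map g zs)"
      and min: "\<forall>x\<in>set (map f ys) \<union> set (map g zs). 0 < x"
      and "cart (map f ys @ 0 # map g zs) = Node (cart ys) () (cart zs)"
      by (rule obtain_shifted_min_split[OF ys(1) zs(1)])
    let ?xs = "map f ys @ 0 # map g zs"
    have "cart ?xs = Node A () B"
      using \<open>cart ?xs = Node (cart ys) () (cart zs)\<close> ys zs by simp
    moreover have "cart (tau ?xs (Suc (size A + j))) = t"
    proof -
      have "length ys = size A" "j < length zs"
        using j size_cart[of ys] size_cart[of zs] ys(2) zs(2) by simp_all
      then have "cart (tau ?xs (Suc (size A + j))) = Node (cart (map f ys)) () (cart (map g (tau zs j)))"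
        using cart_tau_right[OF dist min] j by (simp add: tau_map)
      also have "\<dots> = t"
        using cart_map_strict_mono mono distinct_tau \<open>j < length zs\<close> j ys zs t by simp
      finally show ?thesis .
    qed
    ultimately show "t \<in> ng_at (Node A () B) (Suc (size A + j))"
      using j dist by (auto simp: ng_at_eq)
  qed
qed

lemma size_left_ng_at_before_root:
  assumes "t \<in> ng_at (Node A () B) (size A)"
  shows "Suc (size (left t)) = size A"
proof -
  obtain xs where xs: "distinct xs" "cart xs = Node A () B" and t: "t = cart (tau xs (size A))"
    and "1 \<le> size A"
    using assms unfolding ng_at_def by (auto split: if_splits)
  obtain ys m zs where split: "xs = ys @ m # zs" "\<forall>x\<in>set ys \<union> set zs. m < x"
    and parts: "cart ys = A" "cart zs = B" "length ys = size A" "length zs = size B"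
    by (rule cart_eq_NodeE[OF xs])
  moreover have "ys \<noteq> []" using parts(3) \<open>1 \<le> size A\<close> by auto
  ultimately show ?thesis
    using size_left_cart_tau_before_min[of ys m zs] xs t by auto
qed

lemma size_left_ng_at_after_root:
  assumes "t \<in> ng_at (Node A () B) (Suc (size A))"
  shows "size (left t) = Suc (size A)"
proof -
  obtain xs where xs: "distinct xs" "cart xs = Node A () B" and t: "t = cart (tau xs (Suc (size A)))"
    and "1 \<le> size B"
    using assms unfolding ng_at_def by (auto split: if_splits)
  obtain ys m zs where split: "xs = ys @ m # zs" "\<forall>x\<in>set ys \<union> set zs. m < x"
    and parts: "cart ys = A" "cart zs = B" "length ys = size A" "length zs = size B"
    by (rule cart_eq_NodeE[OF xs])
  moreover have "zs \<noteq> []" using parts(4) \<open>1 \<le> size B\<close> by auto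
  ultimately show ?thesis
    using size_left_cart_tau_after_min[of ys m zs] xs t by auto
qed

lemma ng_Node:
  "ng (Node A () B) = (\<lambda>A'. Node A' () B) ` ng A \<union> (\<lambda>B'. Node A () B') ` ng B
     \<union> ng_at (Node A () B) (size A) \<union> ng_at (Node A () B) (Suc (size A))"
  (is "ng ?T = ?L \<union> ?R \<union> ?P \<union> ?Q")
proof (intro equalityI subsetI)
  fix t
  assume "t \<in> ng ?T"
  then obtain i where t: "t \<in> ng_at ?T i" by (auto simp: ng_eq_UN)
  consider "i < size A" | "i = size A" | "i = Suc (size A)" | "Suc (size A) < i"
    by linarith
  then show "t \<in> ?L \<union> ?R \<union> ?P \<union> ?Q"
  proof cases
    case 1
    then have "t \<in> ?L" using t by (auto simp: ng_at_Node_left ng_eq_UN)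
    then show ?thesis by blast
  next
    case 4
    define j where "j = i - Suc (size A)"
    have "i = Suc (size A + j)" "1 \<le> j" using 4 by (auto simp: j_def)
    then have "t \<in> ?R" using t by (auto simp: ng_at_Node_right ng_eq_UN)
    then show ?thesis by blast
  qed (use t in auto)
next
  fix t
  assume "t \<in> ?L \<union> ?R \<union> ?P \<union> ?Q"
  moreover have "?L \<subseteq> ng ?T"
  proof
    fix t
    assume "t \<in> ?L"
    then obtain A' i where "t = Node A' () B" "A' \<in> ng_at A i" by (auto simp: ng_eq_UN)
    moreover from this have "i < size A" by (auto dest: ng_at_index_range)
    ultimately have "t \<in> ng_at ?T i" by (simp add: ng_at_Node_left)
    then show "t \<in> ng ?T" by (auto simp: ng_eq_UN)
  qed
  moreover have "?R \<subseteq> ng ?T"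
  proof
    fix t
    assume "t \<in> ?R"
    then obtain B' j where "t = Node A () B'" "B' \<in> ng_at B j" by (auto simp: ng_eq_UN)
    moreover from this have "1 \<le> j" by (auto dest: ng_at_index_range)
    ultimately have "t \<in> ng_at ?T (Suc (size A + j))" by (simp add: ng_at_Node_right)
    then show "t \<in> ng ?T" by (auto simp: ng_eq_UN)
  qed
  moreover have "?P \<subseteq> ng ?T" and "?Q \<subseteq> ng ?T"
    by (auto simp: ng_eq_UN)
  ultimately show "t \<in> ng ?T" by blast
qed

lemma card_ng_Node:
  "card (ng (Node A () B)) = card (ng A) + card (ng B)
     + card (ng_at (Node A () B) (size A)) + card (ng_at (Node A () B) (Suc (size A)))"
proof -
  let ?L = "(\<lambda>A'. Node A' () B) ` ng A" and ?R = "(\<lambda>B'. Node A () B') ` ng B"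
  let ?P = "ng_at (Node A () B) (size A)" and ?Q = "ng_at (Node A () B) (Suc (size A))"
  have fin: "finite ?L" "finite ?R" "finite ?P" "finite ?Q"
    by (simp_all add: finite_ng finite_ng_at)
  have left_L_R: "size (left t) = size A" if "t \<in> ?L \<union> ?R" for t
    using that by (auto dest: size_ng)
  have "?L \<inter> ?R = {}"
    using not_in_ng[of A] by auto
  moreover have "(?L \<union> ?R) \<inter> ?P = {}" and "(?L \<union> ?R \<union> ?P) \<inter> ?Q = {}"
    using left_L_R size_left_ng_at_before_root[of _ A B] size_left_ng_at_after_root[of _ A B]
    by fastforce+
  ultimately have "card (ng (Node A () B)) = card ?L + card ?R + card ?P + card ?Q"
    unfolding ng_Node using fin by (simp add: card_Un_disjoint)
  moreover have "card ?L = card (ng A)" and "card ?R = card (ng B)"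
    by (simp_all add: card_image inj_on_def)
  ultimately show ?thesis by simp
qed

theorem lemma7:
  fixes T A B :: "unit tree" and n k :: nat
  assumes "T = Node A () B"
    and "size T = n"
    and "size A = k - 1"
    and "size B = n - k"
    and "1 \<le> k" and "k \<le> n"
  shows "card (ng T) = card (ng A) + card (ng B) + card (ng_at T (k - 1)) + card (ng_at T k)"
proof -
  have "k = Suc (size A)" using assms(3,5) by simp
  then show ?thesis using card_ng_Node[of A B] assms(1,3) by simp
qed

end
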